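(* There are no proper triharmonic curves with constant curvature immersed in the product space $\mathbb{H}^2(4a)\times\mathbb{R}$ ($a<0$).
   Context: $\mathbb{H}^2(4a)\times\mathbb{R}$ is the Riemannian product of the hyperbolic plane of constant curvature $4a<0$ with the real line; equivalently the BCV space $M(a,0)$, i.e. $\{(x,y,z):1+a(x^2+y^2)>0\}$ with metric $\frac{dx^2+dy^2}{[1+a(x^2+y^2)]^2}+dz^2$. An arc-length parametrized curve $\gamma$ with $T=\gamma'$ is triharmonic if $\nabla_T^5T+R(\nabla_T^3T,T)T-R(\nabla_T^2T,\nabla_TT)T=0$, where $\nabla$ is the Levi-Civita connection and $R(X,Y)=\nabla_X\nabla_Y-\nabla_Y\nabla_X-\nabla_{[X,Y]}$; it is proper if it is not a geodesic. The curvature is $\kappa=\lVert\nabla_TT\rVert$. *)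

theory Defs
  imports "HOL-Analysis.Analysis"
begin

text \<open>Riemannian geometry in a global coordinate chart of an open subset of R^n.
  A metric is given by its coefficient matrix G p (entries g_ij(p)).\<close>

definition pdiff :: "(real^'n \<Rightarrow> real) \<Rightarrow> real^'n \<Rightarrow> 'n \<Rightarrow> real" where
  "pdiff f p i = deriv (\<lambda>s. f (p + s *\<^sub>R axis i 1)) 0"

definition christoffel :: "(real^'n \<Rightarrow> real^'n^'n) \<Rightarrow> real^'n \<Rightarrow> 'n \<Rightarrow> 'n \<Rightarrow> 'n \<Rightarrow> real" where
  "christoffel G p k i j = (1/2) * (\<Sum>l\<in>UNIV. matrix_inv (G p) $ k $ l *
      (pdiff (\<lambda>q. G q $ j $ l) p i + pdiff (\<lambda>q. G q $ i $ l) p j - pdiff (\<lambda>q. G q $ i $ j) p l))"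

text \<open>Components R^l_ijk with R(d_i,d_j)d_k = R^l_ijk d_l, for the convention
  R(X,Y) = nabla_X nabla_Y - nabla_Y nabla_X - nabla_[X,Y].\<close>
definition curv_coeff :: "(real^'n \<Rightarrow> real^'n^'n) \<Rightarrow> real^'n \<Rightarrow> 'n \<Rightarrow> 'n \<Rightarrow> 'n \<Rightarrow> 'n \<Rightarrow> real" where
  "curv_coeff G p l i j k =
     pdiff (\<lambda>q. christoffel G q l j k) p i - pdiff (\<lambda>q. christoffel G q l i k) p j
     + (\<Sum>m\<in>UNIV. christoffel G p l i m * christoffel G p m j k
                  - christoffel G p l j m * christoffel G p m i k)"

definition riem :: "(real^'n \<Rightarrow> real^'n^'n) \<Rightarrow> real^'n \<Rightarrow> real^'n \<Rightarrow> real^'n \<Rightarrow> real^'n \<Rightarrow> real^'n" where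
  "riem G p X Y Z = (\<chi> l. \<Sum>i\<in>UNIV. \<Sum>j\<in>UNIV. \<Sum>k\<in>UNIV.
       X $ i * Y $ j * Z $ k * curv_coeff G p l i j k)"

definition ginner :: "(real^'n \<Rightarrow> real^'n^'n) \<Rightarrow> real^'n \<Rightarrow> real^'n \<Rightarrow> real^'n \<Rightarrow> real" where
  "ginner G p u v = (\<Sum>i\<in>UNIV. \<Sum>j\<in>UNIV. G p $ i $ j * u $ i * v $ j)"

definition gnorm :: "(real^'n \<Rightarrow> real^'n^'n) \<Rightarrow> real^'n \<Rightarrow> real^'n \<Rightarrow> real" where
  "gnorm G p u = sqrt (ginner G p u u)"

definition vel :: "(real \<Rightarrow> real^'n) \<Rightarrow> real \<Rightarrow> real^'n" where
  "vel \<gamma> t = (\<chi> k. deriv (\<lambda>s. \<gamma> s $ k) t)"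

definition covd :: "(real^'n \<Rightarrow> real^'n^'n) \<Rightarrow> (real \<Rightarrow> real^'n) \<Rightarrow> (real \<Rightarrow> real^'n) \<Rightarrow> real \<Rightarrow> real^'n" where
  "covd G \<gamma> V t = (\<chi> k. deriv (\<lambda>s. V s $ k) t
       + (\<Sum>i\<in>UNIV. \<Sum>j\<in>UNIV. christoffel G (\<gamma> t) k i j * vel \<gamma> t $ i * V t $ j))"

definition covd_pow :: "(real^'n \<Rightarrow> real^'n^'n) \<Rightarrow> (real \<Rightarrow> real^'n) \<Rightarrow> nat \<Rightarrow> real \<Rightarrow> real^'n" where
  "covd_pow G \<gamma> n = (covd G \<gamma> ^^ n) (vel \<gamma>)"

definition smooth_curve_on :: "(real \<Rightarrow> real^'n) \<Rightarrow> real set \<Rightarrow> bool" where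
  "smooth_curve_on \<gamma> I \<longleftrightarrow> (\<forall>k n. \<forall>t\<in>I. ((deriv ^^ n) (\<lambda>s. \<gamma> s $ k)) differentiable (at t))"

definition arclength_param :: "(real^'n \<Rightarrow> real^'n^'n) \<Rightarrow> (real \<Rightarrow> real^'n) \<Rightarrow> real set \<Rightarrow> bool" where
  "arclength_param G \<gamma> I \<longleftrightarrow> (\<forall>t\<in>I. gnorm G (\<gamma> t) (vel \<gamma> t) = 1)"

definition triharmonic :: "(real^'n \<Rightarrow> real^'n^'n) \<Rightarrow> (real \<Rightarrow> real^'n) \<Rightarrow> real set \<Rightarrow> bool" where
  "triharmonic G \<gamma> I \<longleftrightarrow> (\<forall>t\<in>I.
      covd_pow G \<gamma> 5 t + riem G (\<gamma> t) (covd_pow G \<gamma> 3 t) (vel \<gamma> t) (vel \<gamma> t)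
      - riem G (\<gamma> t) (covd_pow G \<gamma> 2 t) (covd_pow G \<gamma> 1 t) (vel \<gamma> t) = 0)"

definition curvature :: "(real^'n \<Rightarrow> real^'n^'n) \<Rightarrow> (real \<Rightarrow> real^'n) \<Rightarrow> real \<Rightarrow> real" where
  "curvature G \<gamma> t = gnorm G (\<gamma> t) (covd_pow G \<gamma> 1 t)"

definition geodesic_on :: "(real^'n \<Rightarrow> real^'n^'n) \<Rightarrow> (real \<Rightarrow> real^'n) \<Rightarrow> real set \<Rightarrow> bool" where
  "geodesic_on G \<gamma> I \<longleftrightarrow> (\<forall>t\<in>I. covd_pow G \<gamma> 1 t = 0)"

text \<open>The BCV space M(a,0) = H^2(4a) x R (for a < 0): domain and metric
  (dx^2+dy^2)/[1+a(x^2+y^2)]^2 + dz^2, with coordinates x = p$1, y = p$2, z = p$3.\<close>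
definition bcv_domain :: "real \<Rightarrow> (real^3) set" where
  "bcv_domain a = {p. 1 + a * ((p $ 1)\<^sup>2 + (p $ 2)\<^sup>2) > 0}"

definition bcv_metric :: "real \<Rightarrow> real^3 \<Rightarrow> real^3^3" where
  "bcv_metric a p = (\<chi> i j. if i \<noteq> j then 0
       else if i = 3 then 1 else 1 / (1 + a * ((p $ 1)\<^sup>2 + (p $ 2)\<^sup>2))\<^sup>2)"

end

theory Submission
  imports Defs
begin

text \<open>Write \<open>T\<^sub>i\<close> for \<open>\<nabla>\<^sub>T\<^sup>i T\<close> and \<open>g\<^sub>i\<^sub>j\<close> for \<open>\<langle>T\<^sub>i, T\<^sub>j\<rangle>\<close>; metric
  compatibility gives \<open>g\<^sub>i\<^sub>j' = g\<^sub>i\<^sub>+\<^sub>1\<^sub>,\<^sub>j + g\<^sub>i\<^sub>,\<^sub>j\<^sub>+\<^sub>1\<close>.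
  For a unit speed curve of constant curvature \<open>\<kappa> > 0\<close> let \<open>K = \<kappa>\<^sup>2\<close>. Differentiating
  \<open>g\<^sub>0\<^sub>0 = 1\<close> and \<open>g\<^sub>1\<^sub>1 = K\<close> determines the low order entries of the Gram matrix,
  and the tangential part of the triharmonic equation gives \<open>g\<^sub>2\<^sub>3 = 0\<close>, so
  \<open>M = g\<^sub>2\<^sub>2\<close> is constant and \<open>M \<ge> K\<^sup>2\<close>. A dimension count in the three-dimensional
  tangent space yields \<open>T\<^sub>3 = -(M/K) T\<^sub>1\<close>. Since \<open>\<partial>\<^sub>z\<close> is parallel, the vertical components
  \<open>f\<^sub>i\<close> of \<open>T\<^sub>i\<close> satisfy \<open>f\<^sub>i' = f\<^sub>i\<^sub>+\<^sub>1\<close>, and the vertical part \<open>f\<^sub>5 = 0\<close> of the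
  triharmonic equation forces \<open>f\<^sub>1 = f\<^sub>2 = 0\<close>. The \<open>T\<^sub>1\<close>-component of the triharmonic
  equation then reads \<open>M\<^sup>2/K = 4a (M |T|\<^sub>h\<^sup>2 + K\<^sup>2)\<close>, with \<open>|\<cdot>|\<^sub>h\<close> the length of the
  horizontal part, which is impossible for \<open>a < 0\<close>.\<close>

section \<open>The metric of \<open>M(a,0)\<close> in coordinates\<close>

definition bcv_denom :: "real \<Rightarrow> real^3 \<Rightarrow> real" where
  "bcv_denom a p = 1 + a * ((p $ 1)\<^sup>2 + (p $ 2)\<^sup>2)"

definition hcoord :: "real^3 \<Rightarrow> 3 \<Rightarrow> real" where
  "hcoord p m = (if m = 3 then 0 else p $ m)"

lemma hcoord_add_scaleR: "hcoord (p + s *\<^sub>R v) m = hcoord p m + s * hcoord v m"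
  by (simp add: hcoord_def)

lemma bcv_denom_axis_has_deriv:
  "((\<lambda>s. bcv_denom a (p + s *\<^sub>R axis i 1)) has_real_derivative 2 * a * hcoord p i) (at 0)"
proof -
  have "(\<lambda>s. bcv_denom a (p + s *\<^sub>R axis i 1)) =
      (\<lambda>s. 1 + a * ((p$1 + s * (if 1 = i then 1 else 0))\<^sup>2 + (p$2 + s * (if 2 = i then 1 else 0))\<^sup>2))"
    by (simp add: bcv_denom_def axis_def)
  then show ?thesis
    using exhaust_3[of i] by (auto simp: hcoord_def intro!: derivative_eq_intros)
qed

lemma pdiff_eqI: "((\<lambda>s. f (p + s *\<^sub>R axis i 1)) has_real_derivative d) (at 0) \<Longrightarrow> pdiff f p i = d"
  by (simp add: pdiff_def DERIV_imp_deriv)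

lemma bcv_metric_nth:
  "bcv_metric a p $ i $ j = (if i \<noteq> j then 0 else if i = 3 then 1 else 1 / (bcv_denom a p)\<^sup>2)"
  by (simp add: bcv_metric_def bcv_denom_def)

lemma pdiff_bcv_metric:
  assumes "bcv_denom a p \<noteq> 0"
  shows "pdiff (\<lambda>q. bcv_metric a q $ j $ l) p i =
    (if j = l \<and> j \<noteq> 3 then -4 * a * hcoord p i / (bcv_denom a p)^3 else 0)"
proof (cases "j = l \<and> j \<noteq> 3")
  case True
  have "((\<lambda>s. 1 / (bcv_denom a (p + s *\<^sub>R axis i 1))\<^sup>2) has_real_derivative
      -4 * a * hcoord p i / (bcv_denom a p)^3) (at 0)"
    using assms by (auto intro!: derivative_eq_intros bcv_denom_axis_has_deriv
        simp: field_simps power2_eq_square power3_eq_cube)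
  then show ?thesis
    using True by (simp add: bcv_metric_nth pdiff_eqI)
next
  case False
  then have "(\<lambda>q. bcv_metric a q $ j $ l) = (\<lambda>q. if j \<noteq> l then 0 else 1)"
    by (auto simp: bcv_metric_nth)
  then have "pdiff (\<lambda>q. bcv_metric a q $ j $ l) p i = 0"
    by (simp add: pdiff_def)
  with False show ?thesis
    by (simp only: if_False)
qed

lemma matrix_inv_eqI:
  fixes A B :: "real^'n^'n"
  assumes "A ** B = mat 1" "B ** A = mat 1"
  shows "matrix_inv A = B"
proof -
  have "A ** matrix_inv A = mat 1 \<and> matrix_inv A ** A = mat 1"
    unfolding matrix_inv_def by (rule someI[of _ B]) (use assms in simp)
  then have "matrix_inv A = matrix_inv A ** (A ** B)"
    by (simp add: assms matrix_mul_rid matrix_mul_assoc matrix_mul_lid)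
  also have "\<dots> = B"
    by (simp add: \<open>A ** matrix_inv A = mat 1 \<and> matrix_inv A ** A = mat 1\<close>
        matrix_mul_assoc matrix_mul_lid)
  finally show ?thesis .
qed

lemma matrix_inv_bcv_metric:
  assumes "bcv_denom a p \<noteq> 0"
  shows "matrix_inv (bcv_metric a p) =
    (\<chi> i j. if i \<noteq> j then 0 else if i = 3 then 1 else (bcv_denom a p)\<^sup>2)"
  by (rule matrix_inv_eqI)
    (use assms in \<open>auto simp: bcv_metric_nth matrix_matrix_mult_def mat_def vec_eq_iff sum_3 forall_3\<close>)

text \<open>The metric is conformally flat on the horizontal factor, with conformal factor
  \<open>1 / D\<close> for \<open>D = 1 + a (x\<^sup>2 + y\<^sup>2)\<close>; hence
  \<open>\<Gamma>\<^sup>k\<^sub>i\<^sub>j = -(2 a / D) (\<delta>\<^sub>j\<^sub>k x\<^sub>i + \<delta>\<^sub>i\<^sub>k x\<^sub>j - \<delta>\<^sub>i\<^sub>j x\<^sub>k)\<close>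
  for horizontal indices, and every symbol involving the index 3 vanishes.\<close>
definition bcv_christoffel_num :: "real^3 \<Rightarrow> 3 \<Rightarrow> 3 \<Rightarrow> 3 \<Rightarrow> real" where
  "bcv_christoffel_num p k i j = (if k = 3 then 0 else
      (if j = k then hcoord p i else 0) + (if i = k then hcoord p j else 0)
      - (if i = j \<and> i \<noteq> 3 then hcoord p k else 0))"

lemma bcv_christoffel_num_add_scaleR:
  "bcv_christoffel_num (p + s *\<^sub>R v) k i j = bcv_christoffel_num p k i j + s * bcv_christoffel_num v k i j"
  by (simp add: bcv_christoffel_num_def hcoord_add_scaleR algebra_simps)

lemma christoffel_bcv_metric:
  assumes "bcv_denom a p \<noteq> 0"
  shows "christoffel (bcv_metric a) p k i j = -2 * a / bcv_denom a p * bcv_christoffel_num p k i j"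
  using assms
  apply (simp add: christoffel_def matrix_inv_bcv_metric pdiff_bcv_metric sum_3 bcv_christoffel_num_def)
  using exhaust_3[of k] exhaust_3[of i] exhaust_3[of j]
  by (auto simp: hcoord_def field_simps power2_eq_square power3_eq_cube)

lemma pdiff_christoffel_bcv_metric:
  assumes "bcv_denom a p > 0"
  shows "pdiff (\<lambda>q. christoffel (bcv_metric a) q l j k) p i =
    -2 * a * (bcv_christoffel_num (axis i 1) l j k * bcv_denom a p
      - bcv_christoffel_num p l j k * (2 * a * hcoord p i)) / (bcv_denom a p)\<^sup>2"
    (is "_ = ?d")
proof -
  let ?S = "{s. 0 < bcv_denom a (p + s *\<^sub>R axis i 1)}"
  have S: "open ?S"
    by (intro open_Collect_less continuous_intros) (simp_all add: bcv_denom_def continuous_intros)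
  have "((\<lambda>s. -2 * a / bcv_denom a (p + s *\<^sub>R axis i 1) *
      (bcv_christoffel_num p l j k + s * bcv_christoffel_num (axis i 1) l j k)) has_real_derivative ?d) (at 0)"
    using assms by (auto intro!: derivative_eq_intros bcv_denom_axis_has_deriv
        simp: field_simps power2_eq_square)
  then have "((\<lambda>s. christoffel (bcv_metric a) (p + s *\<^sub>R axis i 1) l j k) has_real_derivative ?d) (at 0)"
    by (rule has_field_derivative_transform_within_open[OF _ S])
      (use assms in \<open>simp_all add: christoffel_bcv_metric bcv_christoffel_num_add_scaleR\<close>)
  then show ?thesis
    by (rule pdiff_eqI)
qed

definition bcv_hmetric :: "real \<Rightarrow> real^3 \<Rightarrow> 3 \<Rightarrow> 3 \<Rightarrow> real" where
  "bcv_hmetric a p j k = (if j = k \<and> j \<noteq> 3 then 1 / (bcv_denom a p)\<^sup>2 else 0)"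

lemma curv_coeff_bcv_metric:
  assumes "bcv_denom a p > 0"
  shows "curv_coeff (bcv_metric a) p l i j k = 4 * a *
    ((if l = i \<and> l \<noteq> 3 then bcv_hmetric a p j k else 0) - (if l = j \<and> l \<noteq> 3 then bcv_hmetric a p i k else 0))"
proof -
  have D: "bcv_denom a p \<noteq> 0"
    using assms by simp
  show ?thesis
    using assms
    apply (simp add: curv_coeff_def pdiff_christoffel_bcv_metric christoffel_bcv_metric D sum_3)
    using exhaust_3[of l] exhaust_3[of i] exhaust_3[of j] exhaust_3[of k]
    apply (elim disjE)
    apply (simp_all add: bcv_christoffel_num_def hcoord_def bcv_hmetric_def axis_def)
    apply (simp_all add: D field_simps power2_eq_square)
    apply (unfold bcv_denom_def power2_eq_square)
    apply (simp_all add: algebra_simps)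
    done
qed

definition bcv_hinner :: "real \<Rightarrow> real^3 \<Rightarrow> real^3 \<Rightarrow> real^3 \<Rightarrow> real" where
  "bcv_hinner a p u v = (u$1 * v$1 + u$2 * v$2) / (bcv_denom a p)\<^sup>2"

lemma bcv_hinner_self_nonneg: "bcv_hinner a p u u \<ge> 0"
  by (simp add: bcv_hinner_def)

lemma ginner_bcv_metric: "ginner (bcv_metric a) p u v = bcv_hinner a p u v + u$3 * v$3"
  by (simp add: ginner_def bcv_hinner_def sum_3 bcv_metric_nth add_divide_distrib)

lemma riem_bcv_metric:
  assumes "bcv_denom a p > 0"
  shows "riem (bcv_metric a) p X Y Z =
    (\<chi> l. if l = 3 then 0 else 4 * a * (X$l * bcv_hinner a p Y Z - Y$l * bcv_hinner a p X Z))"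
  unfolding vec_eq_iff
proof
  fix l :: 3
  show "riem (bcv_metric a) p X Y Z $ l =
      (\<chi> l. if l = 3 then 0 else 4 * a * (X$l * bcv_hinner a p Y Z - Y$l * bcv_hinner a p X Z)) $ l"
    using exhaust_3[of l] assms
    by (auto simp: riem_def curv_coeff_bcv_metric sum_3 bcv_hmetric_def bcv_hinner_def field_simps)
qed

lemma ginner_riem_bcv_metric:
  assumes "bcv_denom a p > 0"
  shows "ginner (bcv_metric a) p (riem (bcv_metric a) p X Y Z) W =
    4 * a * (bcv_hinner a p X W * bcv_hinner a p Y Z - bcv_hinner a p Y W * bcv_hinner a p X Z)"
  using assms by (simp add: ginner_bcv_metric riem_bcv_metric bcv_hinner_def field_simps)

lemma orthogonal_to_orthogonal_triple_eq_0:
  fixes u v w x :: "'a::euclidean_space"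
  assumes "DIM('a) = 3" and "u \<noteq> 0" "v \<noteq> 0" "w \<noteq> 0"
    and "u \<bullet> v = 0" "u \<bullet> w = 0" "v \<bullet> w = 0" "x \<bullet> u = 0" "x \<bullet> v = 0" "x \<bullet> w = 0"
  shows "x = 0"
proof (rule ccontr)
  assume "x \<noteq> 0"
  let ?S = "{u, v, w, x}"
  have "u \<noteq> v \<and> u \<noteq> w \<and> u \<noteq> x \<and> v \<noteq> w \<and> v \<noteq> x \<and> w \<noteq> x"
    using assms \<open>x \<noteq> 0\<close> by (metis inner_eq_zero_iff inner_commute)
  then have "card ?S = 4"
    by simp
  moreover have "independent ?S"
    using assms \<open>x \<noteq> 0\<close>
    by (intro pairwise_orthogonal_independent) (auto simp: pairwise_def orthogonal_def inner_commute)
  then have "card ?S \<le> 3"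
    using independent_bound assms(1) by metis
  ultimately show False
    by simp
qed

definition bcv_isometry :: "real \<Rightarrow> real^3 \<Rightarrow> real^3 \<Rightarrow> real^3" where
  "bcv_isometry a p v = (\<chi> i. if i = 3 then v $ i else v $ i / bcv_denom a p)"

lemma ginner_bcv_metric_eq_inner:
  "ginner (bcv_metric a) p u v = bcv_isometry a p u \<bullet> bcv_isometry a p v"
  by (simp add: ginner_bcv_metric bcv_hinner_def bcv_isometry_def inner_vec_def sum_3
      power2_eq_square add_divide_distrib)

lemma bcv_isometry_eq_0_iff: "bcv_denom a p \<noteq> 0 \<Longrightarrow> bcv_isometry a p v = 0 \<longleftrightarrow> v = 0"
  by (auto simp: bcv_isometry_def vec_eq_iff forall_3)

lemma linear_bcv_isometry: "linear (bcv_isometry a p)"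
  by (rule linearI) (simp_all add: bcv_isometry_def vec_eq_iff add_divide_distrib)

lemma bcv_ginner_commute: "ginner (bcv_metric a) p u v = ginner (bcv_metric a) p v u"
  by (simp add: ginner_bcv_metric_eq_inner inner_commute)

lemma bcv_ginner_self_nonneg: "ginner (bcv_metric a) p u u \<ge> 0"
  by (simp add: ginner_bcv_metric_eq_inner)

lemma bcv_ginner_self_eq_0_iff:
  "bcv_denom a p \<noteq> 0 \<Longrightarrow> ginner (bcv_metric a) p u u = 0 \<longleftrightarrow> u = 0"
  by (simp add: ginner_bcv_metric_eq_inner bcv_isometry_eq_0_iff)

lemma bcv_ginner_add_scaleR_left:
  "ginner (bcv_metric a) p (u + c *\<^sub>R v) w = ginner (bcv_metric a) p u w + c * ginner (bcv_metric a) p v w"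
  by (simp add: ginner_bcv_metric_eq_inner linear_add[OF linear_bcv_isometry]
      linear_scale[OF linear_bcv_isometry] inner_add_left)

lemma bcv_ginner_add_scaleR_right:
  "ginner (bcv_metric a) p w (u + c *\<^sub>R v) = ginner (bcv_metric a) p w u + c * ginner (bcv_metric a) p w v"
  using bcv_ginner_add_scaleR_left bcv_ginner_commute by metis

lemma bcv_ginner_add_diff_left:
  "ginner (bcv_metric a) p (u + v - w) z =
    ginner (bcv_metric a) p u z + ginner (bcv_metric a) p v z - ginner (bcv_metric a) p w z"
  by (simp add: ginner_bcv_metric_eq_inner linear_add[OF linear_bcv_isometry]
      linear_diff[OF linear_bcv_isometry] inner_add_left inner_diff_left)

lemma bcv_ginner_orthogonal_triple_eq_0:
  assumes "bcv_denom a p \<noteq> 0" and "u \<noteq> 0" "v \<noteq> 0" "w \<noteq> 0"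
    and "ginner (bcv_metric a) p u v = 0" "ginner (bcv_metric a) p u w = 0" "ginner (bcv_metric a) p v w = 0"
    and "ginner (bcv_metric a) p x u = 0" "ginner (bcv_metric a) p x v = 0" "ginner (bcv_metric a) p x w = 0"
  shows "x = 0"
  using orthogonal_to_orthogonal_triple_eq_0[of "bcv_isometry a p u" "bcv_isometry a p v"
      "bcv_isometry a p w" "bcv_isometry a p x"] assms
  by (simp add: ginner_bcv_metric_eq_inner bcv_isometry_eq_0_iff)

section \<open>Curves in \<open>M(a,0)\<close>\<close>

lemma has_real_derivative_affine_on_open_eq:
  assumes "open I" "t \<in> I" "\<forall>s\<in>I. f s = c * g s + d"
    and "(f has_real_derivative F) (at t)" "(g has_real_derivative G) (at t)"
  shows "F = c * G"
proof -
  have "((\<lambda>s. c * g s + d) has_real_derivative c * G) (at t)"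
    using assms(5) by (auto intro!: derivative_eq_intros)
  then have "(f has_real_derivative c * G) (at t)"
    by (rule has_field_derivative_transform_within_open[OF _ assms(1,2)]) (use assms(3) in simp)
  with assms(4) show ?thesis
    by (rule DERIV_unique)
qed

text \<open>A class of functions closed under differentiation on \<open>I\<close> that contains the components of
  all iterated covariant derivatives of \<open>\<gamma>\<close>; it stands in for a theory of smooth functions.\<close>
inductive_set curve_alg :: "real \<Rightarrow> (real \<Rightarrow> real^3) \<Rightarrow> real set \<Rightarrow> (real \<Rightarrow> real) set"
  for a :: real and \<gamma> :: "real \<Rightarrow> real^3" and I :: "real set" where
  const: "(\<lambda>s. c) \<in> curve_alg a \<gamma> I"
| coord_deriv: "(deriv ^^ n) (\<lambda>s. \<gamma> s $ k) \<in> curve_alg a \<gamma> I"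
| inverse_denom: "(\<lambda>s. 1 / bcv_denom a (\<gamma> s)) \<in> curve_alg a \<gamma> I"
| add: "f \<in> curve_alg a \<gamma> I \<Longrightarrow> g \<in> curve_alg a \<gamma> I \<Longrightarrow> (\<lambda>s. f s + g s) \<in> curve_alg a \<gamma> I"
| mult: "f \<in> curve_alg a \<gamma> I \<Longrightarrow> g \<in> curve_alg a \<gamma> I \<Longrightarrow> (\<lambda>s. f s * g s) \<in> curve_alg a \<gamma> I"
| cong: "g \<in> curve_alg a \<gamma> I \<Longrightarrow> \<forall>t\<in>I. f t = g t \<Longrightarrow> f \<in> curve_alg a \<gamma> I"

lemma curve_alg_coord: "(\<lambda>s. \<gamma> s $ k) \<in> curve_alg a \<gamma> I"
  using curve_alg.coord_deriv[of 0] by simp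

lemma curve_alg_coord_deriv: "deriv (\<lambda>s. \<gamma> s $ k) \<in> curve_alg a \<gamma> I"
  using curve_alg.coord_deriv[of 1] by simp

lemma curve_alg_sum:
  "finite A \<Longrightarrow> (\<And>i. i \<in> A \<Longrightarrow> F i \<in> curve_alg a \<gamma> I) \<Longrightarrow> (\<lambda>s. \<Sum>i\<in>A. F i s) \<in> curve_alg a \<gamma> I"
  by (induction A rule: finite_induct) (auto intro: curve_alg.const curve_alg.add)

lemma curve_alg_vel: "(\<lambda>s. vel \<gamma> s $ i) \<in> curve_alg a \<gamma> I"
  using curve_alg_coord_deriv by (simp add: vel_def)

lemma curve_alg_hcoord: "(\<lambda>s. hcoord (\<gamma> s) m) \<in> curve_alg a \<gamma> I"
  by (cases "m = 3") (simp_all add: hcoord_def curve_alg.const curve_alg_coord)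

lemma curve_alg_christoffel_num: "(\<lambda>s. bcv_christoffel_num (\<gamma> s) k i j) \<in> curve_alg a \<gamma> I"
proof -
  have "(\<lambda>s. (if k = 3 then 0 else 1) * ((if j = k then 1 else 0) * hcoord (\<gamma> s) i
      + (if i = k then 1 else 0) * hcoord (\<gamma> s) j
      + (if i = j \<and> i \<noteq> 3 then -1 else 0) * hcoord (\<gamma> s) k)) \<in> curve_alg a \<gamma> I"
    by (intro curve_alg.mult curve_alg.add curve_alg.const curve_alg_hcoord)
  then show ?thesis
    by (rule curve_alg.cong) (auto simp: bcv_christoffel_num_def)
qed

locale bcv_curve =
  fixes a :: real and \<gamma> :: "real \<Rightarrow> real^3" and I :: "real set"
  assumes open_I: "open I"
    and smooth: "smooth_curve_on \<gamma> I"
    and in_domain: "\<forall>t\<in>I. \<gamma> t \<in> bcv_domain a"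
begin

lemma denom_pos: "t \<in> I \<Longrightarrow> bcv_denom a (\<gamma> t) > 0"
  using in_domain by (simp add: bcv_domain_def bcv_denom_def)

lemma denom_nonzero: "t \<in> I \<Longrightarrow> bcv_denom a (\<gamma> t) \<noteq> 0"
  using denom_pos by fastforce

lemma coord_has_deriv:
  "t \<in> I \<Longrightarrow> ((deriv ^^ n) (\<lambda>s. \<gamma> s $ k) has_real_derivative (deriv ^^ Suc n) (\<lambda>s. \<gamma> s $ k) t) (at t)"
  using smooth by (simp add: smooth_curve_on_def DERIV_deriv_iff_real_differentiable)

lemma denom_has_deriv:
  "t \<in> I \<Longrightarrow> ((\<lambda>s. bcv_denom a (\<gamma> s)) has_real_derivative
    2 * a * (\<gamma> t $ 1 * deriv (\<lambda>s. \<gamma> s $ 1) t + \<gamma> t $ 2 * deriv (\<lambda>s. \<gamma> s $ 2) t)) (at t)"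
  using coord_has_deriv[of t 0] unfolding bcv_denom_def
  by (auto intro!: derivative_eq_intros simp: algebra_simps)

lemma curve_alg_has_deriv:
  "h \<in> curve_alg a \<gamma> I \<Longrightarrow> \<exists>h'\<in>curve_alg a \<gamma> I. \<forall>t\<in>I. (h has_real_derivative h' t) (at t)"
proof (induction h rule: curve_alg.induct)
  case (const c)
  show ?case
    by (intro bexI[of _ "\<lambda>s. 0"] curve_alg.const) auto
next
  case (coord_deriv n k)
  show ?case
    by (intro bexI[of _ "(deriv ^^ Suc n) (\<lambda>s. \<gamma> s $ k)"] ballI coord_has_deriv curve_alg.coord_deriv)
next
  case inverse_denom
  let ?h = "\<lambda>s. (-2 * a) * (\<gamma> s $ 1 * deriv (\<lambda>s. \<gamma> s $ 1) s + \<gamma> s $ 2 * deriv (\<lambda>s. \<gamma> s $ 2) s)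
    * (1 / bcv_denom a (\<gamma> s) * (1 / bcv_denom a (\<gamma> s)))"
  have h: "?h \<in> curve_alg a \<gamma> I"
    by (intro curve_alg.mult curve_alg.add curve_alg.const curve_alg_coord curve_alg_coord_deriv
        curve_alg.inverse_denom)
  have "\<forall>t\<in>I. ((\<lambda>s. 1 / bcv_denom a (\<gamma> s)) has_real_derivative ?h t) (at t)"
    using denom_nonzero by (auto intro!: derivative_eq_intros denom_has_deriv
        simp: field_simps power2_eq_square)
  from this h show ?case
    by (rule bexI)
next
  case (add f g)
  then obtain f' g' where f': "f' \<in> curve_alg a \<gamma> I" "\<forall>t\<in>I. (f has_real_derivative f' t) (at t)"
    and g': "g' \<in> curve_alg a \<gamma> I" "\<forall>t\<in>I. (g has_real_derivative g' t) (at t)"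
    by blast
  show ?case
  proof (intro bexI[of _ "\<lambda>s. f' s + g' s"] ballI)
    show "((\<lambda>s. f s + g s) has_real_derivative f' t + g' t) (at t)" if "t \<in> I" for t
      using that f'(2) g'(2) by (simp add: DERIV_add)
  qed (rule curve_alg.add[OF f'(1) g'(1)])
next
  case (mult f g)
  then obtain f' g' where f': "f' \<in> curve_alg a \<gamma> I" "\<forall>t\<in>I. (f has_real_derivative f' t) (at t)"
    and g': "g' \<in> curve_alg a \<gamma> I" "\<forall>t\<in>I. (g has_real_derivative g' t) (at t)"
    by blast
  show ?case
  proof (intro bexI[of _ "\<lambda>s. f' s * g s + f s * g' s"] ballI)
    show "((\<lambda>s. f s * g s) has_real_derivative f' t * g t + f t * g' t) (at t)" if "t \<in> I" for t
      using DERIV_mult[OF f'(2)[rule_format, OF that] g'(2)[rule_format, OF that]]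
      by (simp add: mult.commute)
    show "(\<lambda>s. f' s * g s + f s * g' s) \<in> curve_alg a \<gamma> I"
      using mult.hyps f'(1) g'(1) by (intro curve_alg.add curve_alg.mult)
  qed
next
  case (cong g f)
  then obtain g' where g': "g' \<in> curve_alg a \<gamma> I" "\<forall>t\<in>I. (g has_real_derivative g' t) (at t)"
    by blast
  have "\<forall>t\<in>I. (f has_real_derivative g' t) (at t)"
  proof
    fix t assume "t \<in> I"
    with g'(2) cong.hyps(2) show "(f has_real_derivative g' t) (at t)"
      by (auto intro: has_field_derivative_transform_within_open[OF _ open_I])
  qed
  from this g'(1) show ?case
    by (rule bexI)
qed

lemma curve_alg_has_deriv_at:
  assumes "h \<in> curve_alg a \<gamma> I" "t \<in> I"
  shows "(h has_real_derivative deriv h t) (at t)"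
  using curve_alg_has_deriv[OF assms(1)] assms(2) DERIV_imp_deriv by metis

lemma deriv_in_curve_alg:
  assumes "h \<in> curve_alg a \<gamma> I"
  shows "deriv h \<in> curve_alg a \<gamma> I"
proof -
  obtain h' where "h' \<in> curve_alg a \<gamma> I" "\<forall>t\<in>I. (h has_real_derivative h' t) (at t)"
    using curve_alg_has_deriv[OF assms] by blast
  then show ?thesis
    by (auto intro: curve_alg.cong simp: DERIV_imp_deriv)
qed

lemma curve_alg_christoffel: "(\<lambda>s. christoffel (bcv_metric a) (\<gamma> s) k i j) \<in> curve_alg a \<gamma> I"
proof (rule curve_alg.cong)
  show "(\<lambda>s. -2 * a * (1 / bcv_denom a (\<gamma> s)) * bcv_christoffel_num (\<gamma> s) k i j) \<in> curve_alg a \<gamma> I"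
    by (intro curve_alg.mult curve_alg.const curve_alg.inverse_denom curve_alg_christoffel_num)
  show "\<forall>t\<in>I. christoffel (bcv_metric a) (\<gamma> t) k i j =
      -2 * a * (1 / bcv_denom a (\<gamma> t)) * bcv_christoffel_num (\<gamma> t) k i j"
    by (simp add: christoffel_bcv_metric denom_nonzero)
qed

lemma curve_alg_covd:
  assumes "\<And>k. (\<lambda>s. V s $ k) \<in> curve_alg a \<gamma> I"
  shows "(\<lambda>s. covd (bcv_metric a) \<gamma> V s $ k) \<in> curve_alg a \<gamma> I"
  unfolding covd_def vec_lambda_beta
  by (intro curve_alg.add curve_alg.mult deriv_in_curve_alg curve_alg_sum finite_UNIV
      curve_alg_christoffel curve_alg_vel assms) simp_all

lemma curve_alg_covd_pow: "(\<lambda>s. covd_pow (bcv_metric a) \<gamma> n s $ k) \<in> curve_alg a \<gamma> I"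
proof (induction n arbitrary: k)
  case 0
  then show ?case
    by (simp add: covd_pow_def curve_alg_vel)
next
  case (Suc n)
  then show ?case
    using curve_alg_covd[of "covd_pow (bcv_metric a) \<gamma> n"] by (simp add: covd_pow_def)
qed

lemma covd_vertical: "t \<in> I \<Longrightarrow> covd (bcv_metric a) \<gamma> V t $ 3 = deriv (\<lambda>s. V s $ 3) t"
  by (simp add: covd_def christoffel_bcv_metric denom_nonzero bcv_christoffel_num_def)

lemma ginner_covd_has_deriv:
  assumes t: "t \<in> I"
    and U: "\<And>k. (\<lambda>s. U s $ k) \<in> curve_alg a \<gamma> I" and V: "\<And>k. (\<lambda>s. V s $ k) \<in> curve_alg a \<gamma> I"
  shows "((\<lambda>s. ginner (bcv_metric a) (\<gamma> s) (U s) (V s)) has_real_derivative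
    ginner (bcv_metric a) (\<gamma> t) (covd (bcv_metric a) \<gamma> U t) (V t)
    + ginner (bcv_metric a) (\<gamma> t) (U t) (covd (bcv_metric a) \<gamma> V t)) (at t)"
proof -
  define e where "e = 1 / bcv_denom a (\<gamma> t)"
  have ginner_eq: "ginner (bcv_metric a) p u v =
      (u$1 * v$1 + u$2 * v$2) * (1 / bcv_denom a p * (1 / bcv_denom a p)) + u$3 * v$3" for p u v
    by (simp add: ginner_bcv_metric bcv_hinner_def power2_eq_square)
  have inv_denom: "((\<lambda>s. 1 / bcv_denom a (\<gamma> s)) has_real_derivative
      - (2 * a * (\<gamma> t $ 1 * deriv (\<lambda>s. \<gamma> s $ 1) t + \<gamma> t $ 2 * deriv (\<lambda>s. \<gamma> s $ 2) t)) * e * e) (at t)"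
    using denom_nonzero[OF t]
    by (auto intro!: derivative_eq_intros denom_has_deriv[OF t] simp: e_def power2_eq_square)
  have christoffel_eq:
    "christoffel (bcv_metric a) (\<gamma> t) k i j = -2 * a * e * bcv_christoffel_num (\<gamma> t) k i j" for k i j
    using denom_nonzero[OF t] by (simp add: christoffel_bcv_metric e_def)
  show ?thesis
    unfolding ginner_eq
    apply (rule inv_denom curve_alg_has_deriv_at[OF U t] curve_alg_has_deriv_at[OF V t]
        derivative_eq_intros refl)+
    unfolding e_def[symmetric]
    by (simp add: covd_def christoffel_eq sum_3 bcv_christoffel_num_def hcoord_def vel_def
        algebra_simps)
qed

abbreviation T :: "nat \<Rightarrow> real \<Rightarrow> real^3" where
  "T i \<equiv> covd_pow (bcv_metric a) \<gamma> i"

definition gram :: "nat \<Rightarrow> nat \<Rightarrow> real \<Rightarrow> real" where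
  "gram i j t = ginner (bcv_metric a) (\<gamma> t) (T i t) (T j t)"

definition vert :: "nat \<Rightarrow> real \<Rightarrow> real" where
  "vert i t = T i t $ 3"

definition hgram :: "nat \<Rightarrow> nat \<Rightarrow> real \<Rightarrow> real" where
  "hgram i j t = bcv_hinner a (\<gamma> t) (T i t) (T j t)"

lemma hgram_eq: "hgram i j t = gram i j t - vert i t * vert j t"
  by (simp add: hgram_def gram_def vert_def ginner_bcv_metric)

lemma hgram_self_nonneg: "hgram i i t \<ge> 0"
  by (simp add: hgram_def bcv_hinner_self_nonneg)

lemma gram_commute: "gram i j t = gram j i t"
  by (simp add: gram_def bcv_ginner_commute)

lemma gram_self_eq_0_iff: "t \<in> I \<Longrightarrow> gram i i t = 0 \<longleftrightarrow> T i t = 0"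
  by (simp add: gram_def bcv_ginner_self_eq_0_iff denom_nonzero)

lemma covd_T: "covd (bcv_metric a) \<gamma> (T i) = T (i + 1)"
  by (simp add: covd_pow_def)

lemma gram_has_deriv:
  "t \<in> I \<Longrightarrow> (gram i j has_real_derivative gram (i + 1) j t + gram i (j + 1) t) (at t)"
  using ginner_covd_has_deriv[OF _ curve_alg_covd_pow curve_alg_covd_pow, of t i j]
  by (simp add: gram_def[abs_def] covd_T)

lemma vert_has_deriv: "t \<in> I \<Longrightarrow> (vert i has_real_derivative vert (i + 1) t) (at t)"
  using curve_alg_has_deriv_at[OF curve_alg_covd_pow, of t i 3] covd_vertical[of t "T i"]
  by (simp add: vert_def[abs_def] covd_T)

lemma gram_affine_deriv:
  assumes "\<And>s. s \<in> I \<Longrightarrow> gram i j s = c * gram k l s + d" and "t \<in> I"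
  shows "gram (i + 1) j t + gram i (j + 1) t = c * (gram (k + 1) l t + gram k (l + 1) t)"
  using has_real_derivative_affine_on_open_eq[OF open_I \<open>t \<in> I\<close> _ gram_has_deriv gram_has_deriv]
    assms by blast

lemma gram_const_deriv:
  assumes "\<And>s. s \<in> I \<Longrightarrow> gram i j s = d" and "t \<in> I"
  shows "gram (i + 1) j t + gram i (j + 1) t = 0"
  using gram_affine_deriv[of i j 0 i j d t] assms by simp

lemma vert_linear_deriv:
  assumes "\<And>s. s \<in> I \<Longrightarrow> vert i s = c * vert k s" and "t \<in> I"
  shows "vert (i + 1) t = c * vert (k + 1) t"
proof -
  have "\<forall>s\<in>I. vert i s = c * vert k s + 0"
    using assms(1) by simp
  then show ?thesis
    by (rule has_real_derivative_affine_on_open_eq[OF open_I assms(2) _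
          vert_has_deriv[OF assms(2)] vert_has_deriv[OF assms(2)]])
qed

lemma gram_self_nonneg: "gram i i t \<ge> 0"
  by (simp add: gram_def bcv_ginner_self_nonneg)

lemma arclength_param_iff: "arclength_param (bcv_metric a) \<gamma> I \<longleftrightarrow> (\<forall>t\<in>I. gram 0 0 t = 1)"
  by (simp add: arclength_param_def gnorm_def gram_def covd_pow_def)

lemma curvature_eq_sqrt_gram: "curvature (bcv_metric a) \<gamma> t = sqrt (gram 1 1 t)"
  by (simp add: curvature_def gnorm_def gram_def)

lemma geodesic_on_iff: "geodesic_on (bcv_metric a) \<gamma> I \<longleftrightarrow> (\<forall>t\<in>I. gram 1 1 t = 0)"
  by (simp add: geodesic_on_def gram_self_eq_0_iff)

end

section \<open>Triharmonic curves of constant curvature\<close>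

locale bcv_triharmonic_curve = bcv_curve +
  fixes K :: real
  assumes connected_I: "connected I" and nonempty_I: "I \<noteq> {}"
    and triharmonic: "triharmonic (bcv_metric a) \<gamma> I"
    and unit_speed: "\<And>t. t \<in> I \<Longrightarrow> gram 0 0 t = 1"
    and const_curvature: "\<And>t. t \<in> I \<Longrightarrow> gram 1 1 t = K"
    and curvature_pos: "K > 0"
begin

lemma triharmonic_gram_5:
  assumes "t \<in> I"
  shows "gram 5 k t = 4 * a * (hgram 0 k t * hgram 3 0 t - hgram 3 k t * hgram 0 0 t)
    + 4 * a * (hgram 2 k t * hgram 1 0 t - hgram 1 k t * hgram 2 0 t)"
proof -
  have "T 5 t + riem (bcv_metric a) (\<gamma> t) (T 3 t) (T 0 t) (T 0 t)
      - riem (bcv_metric a) (\<gamma> t) (T 2 t) (T 1 t) (T 0 t) = 0"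
    using triharmonic assms by (simp add: triharmonic_def covd_pow_def)
  then have "ginner (bcv_metric a) (\<gamma> t) (T 5 t + riem (bcv_metric a) (\<gamma> t) (T 3 t) (T 0 t) (T 0 t)
      - riem (bcv_metric a) (\<gamma> t) (T 2 t) (T 1 t) (T 0 t)) (T k t) = 0"
    by (simp add: ginner_def)
  then show ?thesis
    unfolding bcv_ginner_add_diff_left ginner_riem_bcv_metric[OF denom_pos[OF assms]]
    by (simp add: gram_def hgram_def algebra_simps)
qed

lemma triharmonic_vert_5:
  assumes "t \<in> I"
  shows "vert 5 t = 0"
proof -
  have "(T 5 t + riem (bcv_metric a) (\<gamma> t) (T 3 t) (T 0 t) (T 0 t)
      - riem (bcv_metric a) (\<gamma> t) (T 2 t) (T 1 t) (T 0 t)) $ 3 = 0"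
    using triharmonic assms by (simp add: triharmonic_def covd_pow_def)
  then show ?thesis
    by (simp add: vert_def riem_bcv_metric denom_pos[OF assms])
qed

lemma gram_01: "t \<in> I \<Longrightarrow> gram 0 1 t = 0"
  using gram_const_deriv[OF unit_speed, of t] gram_commute[of 1 0 t]
  by (simp add: eval_nat_numeral)

lemma gram_12: "t \<in> I \<Longrightarrow> gram 1 2 t = 0"
  using gram_const_deriv[OF const_curvature, of t] gram_commute[of 2 1 t]
  by (simp add: eval_nat_numeral)

lemma gram_02: "t \<in> I \<Longrightarrow> gram 0 2 t = - K"
  using gram_const_deriv[OF gram_01, of t] const_curvature[of t] by (simp add: eval_nat_numeral)

lemma gram_13: "t \<in> I \<Longrightarrow> gram 1 3 t = - gram 2 2 t"
  using gram_const_deriv[OF gram_12, of t] by (simp add: eval_nat_numeral)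

lemma gram_03: "t \<in> I \<Longrightarrow> gram 0 3 t = 0"
  using gram_const_deriv[OF gram_02, of t] gram_12[of t] by (simp add: eval_nat_numeral)

lemma gram_04: "t \<in> I \<Longrightarrow> gram 0 4 t = gram 2 2 t"
  using gram_const_deriv[OF gram_03, of t] gram_13[of t] by (simp add: eval_nat_numeral)

lemma gram_14: "t \<in> I \<Longrightarrow> gram 1 4 t = -3 * gram 2 3 t"
  using gram_affine_deriv[of 1 3 "-1" 2 2 0 t] gram_13 gram_commute[of 3 2 t]
  by (simp add: eval_nat_numeral)

lemma gram_05: "t \<in> I \<Longrightarrow> gram 0 5 t = 5 * gram 2 3 t"
  using gram_affine_deriv[of 0 4 1 2 2 0 t] gram_04 gram_14[of t] gram_commute[of 3 2 t]
  by (simp add: eval_nat_numeral)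

lemma gram_23: "t \<in> I \<Longrightarrow> gram 2 3 t = 0"
  using triharmonic_gram_5[of t 0] gram_05[of t] gram_commute[of 5 0 t]
  by (simp add: eval_nat_numeral algebra_simps)

lemma gram_22_const: "\<exists>M. \<forall>t\<in>I. gram 2 2 t = M"
proof -
  have "(gram 2 2 has_real_derivative 0) (at t)" if "t \<in> I" for t
    using gram_has_deriv[OF that, of 2 2] gram_23[OF that] gram_commute[of 3 2 t]
    by (simp add: eval_nat_numeral)
  then have "gram 2 2 constant_on I"
    using has_field_derivative_0_imp_constant_on connected_I open_I by blast
  then show ?thesis
    by (auto simp: constant_on_def)
qed

lemma gram_24: "t \<in> I \<Longrightarrow> gram 2 4 t = - gram 3 3 t"
  using gram_const_deriv[OF gram_23, of t] by (simp add: eval_nat_numeral)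

lemma gram_15: "t \<in> I \<Longrightarrow> gram 1 5 t = gram 3 3 t"
  using gram_const_deriv[of 1 4 0 t] gram_14 gram_23 gram_24[of t] by (simp add: eval_nat_numeral)

lemma ginner_T2_plus_K_T0:
  assumes "\<forall>t\<in>I. gram 2 2 t = M" "t \<in> I"
  shows "ginner (bcv_metric a) (\<gamma> t) (T 2 t + K *\<^sub>R T 0 t) (T 2 t + K *\<^sub>R T 0 t) = M - K\<^sup>2"
  using assms unit_speed gram_02 gram_commute[of 2 0 t]
  by (simp add: bcv_ginner_add_scaleR_left bcv_ginner_add_scaleR_right gram_def[symmetric]
      power2_eq_square algebra_simps)

lemma ginner_T3_plus_T1:
  assumes "\<forall>t\<in>I. gram 2 2 t = M" "t \<in> I"
  shows "ginner (bcv_metric a) (\<gamma> t) (T 3 t + (M / K) *\<^sub>R T 1 t) (T 3 t + (M / K) *\<^sub>R T 1 t)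
    = gram 3 3 t - M\<^sup>2 / K"
  using assms const_curvature gram_13 gram_commute[of 3 1 t] curvature_pos
  by (simp add: bcv_ginner_add_scaleR_left bcv_ginner_add_scaleR_right gram_def[symmetric]
      field_simps power2_eq_square)

lemma K_sq_le_gram_22:
  assumes "\<forall>t\<in>I. gram 2 2 t = M"
  shows "K\<^sup>2 \<le> M"
proof -
  obtain t where "t \<in> I"
    using nonempty_I by blast
  then show ?thesis
    using ginner_T2_plus_K_T0[OF assms] bcv_ginner_self_nonneg[of a "\<gamma> t" "T 2 t + K *\<^sub>R T 0 t"]
    by simp
qed

lemma T3_eq_scaled_T1:
  assumes M: "\<forall>t\<in>I. gram 2 2 t = M" and t: "t \<in> I"
  shows "T 3 t = - (M / K) *\<^sub>R T 1 t"
proof -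
  let ?g = "ginner (bcv_metric a) (\<gamma> t)"
  let ?P = "T 2 t + K *\<^sub>R T 0 t" and ?Q = "T 3 t + (M / K) *\<^sub>R T 1 t"
  \<comment> \<open>If \<open>M = K\<^sup>2\<close> then \<open>?P = 0\<close>, and pairing it with \<open>T 4\<close> shows \<open>?Q\<close> has length 0;
    otherwise \<open>T 0\<close>, \<open>T 1\<close>, \<open>?P\<close> are nonzero, pairwise orthogonal, and orthogonal to \<open>?Q\<close>.\<close>
  have "?Q = 0"
  proof (cases "M = K\<^sup>2")
    case True
    then have "?P = 0"
      using ginner_T2_plus_K_T0[OF M t] bcv_ginner_self_eq_0_iff[OF denom_nonzero[OF t]] by simp
    then have "?g ?P (T 4 t) = 0"
      by (simp add: ginner_def)
    then have "gram 3 3 t = K * M"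
      using gram_24[OF t] gram_04[OF t] M t
      by (simp add: bcv_ginner_add_scaleR_left gram_def[symmetric])
    then have "?g ?Q ?Q = 0"
      using ginner_T3_plus_T1[OF M t] True curvature_pos by (simp add: power2_eq_square)
    then show ?thesis
      using bcv_ginner_self_eq_0_iff[OF denom_nonzero[OF t]] by blast
  next
    case False
    have "T 0 t \<noteq> 0" "T 1 t \<noteq> 0"
      using unit_speed[OF t] const_curvature[OF t] curvature_pos by (auto simp: gram_def ginner_def)
    moreover have "?P \<noteq> 0"
    proof
      assume "?P = 0"
      then have "?g ?P ?P = 0"
        by (simp add: ginner_def)
      with False ginner_T2_plus_K_T0[OF M t] show False
        by simp
    qed
    moreover note unit_speed[OF t] const_curvature[OF t] gram_01[OF t] gram_12[OF t]
      gram_02[OF t] gram_03[OF t] gram_13[OF t] M[rule_format, OF t] gram_23[OF t]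
      gram_commute[of 1 0 t] gram_commute[of 2 0 t] gram_commute[of 2 1 t] gram_commute[of 3 0 t]
      gram_commute[of 3 1 t] gram_commute[of 3 2 t]
    ultimately show ?thesis
      using curvature_pos
      by (intro bcv_ginner_orthogonal_triple_eq_0[OF denom_nonzero[OF t], of "T 0 t" "T 1 t" ?P])
        (simp_all add: bcv_ginner_add_scaleR_left bcv_ginner_add_scaleR_right gram_def[symmetric])
  qed
  then show ?thesis
    by (simp add: add_eq_0_iff2)
qed

lemma gram_22_pos:
  assumes "\<forall>t\<in>I. gram 2 2 t = M"
  shows "M > 0"
  using K_sq_le_gram_22[OF assms] curvature_pos by (smt (verit) zero_less_power)

lemma gram_33:
  assumes "\<forall>t\<in>I. gram 2 2 t = M" and "t \<in> I"
  shows "gram 3 3 t = M\<^sup>2 / K"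
  using ginner_T3_plus_T1[OF assms] T3_eq_scaled_T1[OF assms] by (simp add: ginner_def)

lemma vert_1:
  assumes M: "\<forall>t\<in>I. gram 2 2 t = M" and t: "t \<in> I"
  shows "vert 1 t = 0"
proof -
  have vert_3: "vert 3 s = - (M / K) * vert 1 s" if "s \<in> I" for s
    using T3_eq_scaled_T1[OF M that] by (simp add: vert_def)
  have "vert 5 t = - (M / K) * vert 3 t"
    using vert_linear_deriv[OF vert_linear_deriv[OF vert_3], of t] t by (simp add: eval_nat_numeral)
  then have "(M / K) * ((M / K) * vert 1 t) = 0"
    using triharmonic_vert_5[OF t] vert_3[OF t] by simp
  moreover have "M / K \<noteq> 0"
    using gram_22_pos[OF M] curvature_pos by simp
  ultimately show ?thesis
    by simp
qed

lemma vert_2: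
  assumes "\<forall>t\<in>I. gram 2 2 t = M" and "t \<in> I"
  shows "vert 2 t = 0"
  using vert_linear_deriv[of 1 0 1 t] vert_1[OF assms(1)] assms(2) by (simp add: eval_nat_numeral)

lemma param_pos: "a > 0"
proof -
  obtain M where M: "\<forall>t\<in>I. gram 2 2 t = M"
    using gram_22_const by blast
  obtain t where t: "t \<in> I"
    using nonempty_I by blast
  have "gram 5 1 t = M\<^sup>2 / K"
    using gram_15[OF t] gram_33[OF M t] gram_commute[of 5 1 t] by simp
  moreover note triharmonic_gram_5[OF t, of 1]
  moreover have "hgram 3 1 t = - M" "hgram 0 1 t = 0" "hgram 2 1 t = 0" "hgram 1 1 t = K"
    "hgram 2 0 t = - K"
    using gram_13[OF t] gram_01[OF t] gram_12[OF t] gram_02[OF t] const_curvature[OF t] M t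
      vert_1[OF M t] vert_2[OF M t] gram_commute[of 3 1 t] gram_commute[of 2 1 t] gram_commute[of 2 0 t]
    by (simp_all add: hgram_eq)
  ultimately have "a * (4 * (M * hgram 0 0 t + K\<^sup>2)) = M\<^sup>2 / K"
    by (simp add: gram_commute[of 1 0 t] hgram_eq[of 1 0 t] hgram_eq[of 0 1 t] power2_eq_square
        algebra_simps)
  moreover have "M\<^sup>2 / K > 0" and "M * hgram 0 0 t + K\<^sup>2 > 0"
    using gram_22_pos[OF M] curvature_pos hgram_self_nonneg[of 0 t] by (simp_all add: add_nonneg_pos)
  ultimately show ?thesis
    by (metis zero_less_mult_pos2 zero_less_numeral mult_pos_pos mult.commute)
qed

end

theorem corollary4p10:
  fixes a :: real and \<gamma> :: "real \<Rightarrow> real^3" and I :: "real set"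
  assumes "a < 0"
    and "open I" and "connected I" and "I \<noteq> {}"
    and "smooth_curve_on \<gamma> I"
    and "\<forall>t\<in>I. \<gamma> t \<in> bcv_domain a"
    and "arclength_param (bcv_metric a) \<gamma> I"
    and "\<exists>c. \<forall>t\<in>I. curvature (bcv_metric a) \<gamma> t = c"
    and "triharmonic (bcv_metric a) \<gamma> I"
  shows "geodesic_on (bcv_metric a) \<gamma> I"
proof -
  interpret bcv_curve a \<gamma> I
    using assms(2,5,6) by unfold_locales
  obtain c where "\<forall>t\<in>I. sqrt (gram 1 1 t) = c"
    using assms(8) by (auto simp: curvature_eq_sqrt_gram)
  then have gram_11: "\<forall>t\<in>I. gram 1 1 t = c\<^sup>2"
    using gram_self_nonneg by force
  show ?thesis
  proof (cases "c = 0")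
    case True
    with gram_11 show ?thesis
      by (simp add: geodesic_on_iff)
  next
    case False
    interpret bcv_triharmonic_curve a \<gamma> I "c\<^sup>2"
      using assms(3,4,7,9) gram_11 False by unfold_locales (auto simp: arclength_param_iff)
    from param_pos assms(1) show ?thesis
      by simp
  qed
qed

end
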